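(* Let $n\in\mathbb N$, $T_1,\dots,T_n\in B(\mathcal H)$, $\varphi(X):=\sum_{i=1}^nT_iXT_i^*$ and $\varphi^*(X):=\sum_{i=1}^nT_i^*XT_i$. Let $D\in B(\mathcal H)$ be positive with $\varphi(D)\le D$. Then the limit $$\operatorname{curv}_*(\varphi,D):=\lim_{k\to\infty}\frac{\operatorname{trace}[K_{\varphi,D}^*(P_{\le k}\otimes I)K_{\varphi,D}]}{1+\|\varphi^*(I)\|+\cdots+\|\varphi^*(I)\|^k}$$ exists (in $[0,\infty]$). Moreover, $\operatorname{curv}_*(\varphi,D)<\infty$ if and only if $\operatorname{trace}(D-\varphi(D))<\infty$.
   Context: $F^2(H_n)=\bigoplus_{k\ge0}H_n^{\otimes k}$ is the full Fock space of $H_n$ with orthonormal basis $e_1,\dots,e_n$; for a word $\alpha=g_{i_1}\cdots g_{i_k}$ in the free semigroup $\mathbb F_n^+$, $|\alpha|=k$, $e_\alpha=e_{i_1}\otimes\cdots\otimes e_{i_k}$, $T_\alpha=T_{i_1}\cdots T_{i_k}$ (empty word: $e=1$, $T=I$). The Poisson kernel $K_{\varphi,D}:\mathcal H\to F^2(H_n)\otimes\mathcal H$ is $K_{\varphi,D}h:=\sum_{\alpha\in\mathbb F_n^+}e_\alpha\otimes\Delta T_\alpha^*h$ with $\Delta:=(D-\varphi(D))^{1/2}$. $P_{\le k}$ is the orthogonal projection of $F^2(H_n)$ onto the span of $\{e_\alpha:|\alpha|\le k\}$. *)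

theory Defs
  imports "HOL-Analysis.Analysis"
begin

definition orthonormal_basis :: "'a::real_inner set \<Rightarrow> bool" where
  "orthonormal_basis B \<longleftrightarrow>
     (\<forall>e\<in>B. norm e = 1) \<and> (\<forall>e\<in>B. \<forall>f\<in>B. e \<noteq> f \<longrightarrow> inner e f = 0) \<and>
     closure (span B) = UNIV"

definition some_onb :: "'a::real_inner set" where
  "some_onb = (SOME B. orthonormal_basis B)"

definition positive_op :: "('a::real_inner \<Rightarrow> 'a) \<Rightarrow> bool" where
  "positive_op A \<longleftrightarrow> bounded_linear A \<and> (\<forall>x y. inner (A x) y = inner x (A y)) \<and>
     (\<forall>x. 0 \<le> inner (A x) x)"

definition pos_trace :: "('a::real_inner \<Rightarrow> 'a) \<Rightarrow> ennreal" where
  "pos_trace A = (\<Sum>\<^sub>\<infinity>e\<in>some_onb. ennreal (inner (A e) e))"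

definition op_sqrt :: "('a::real_inner \<Rightarrow> 'a) \<Rightarrow> ('a \<Rightarrow> 'a)" where
  "op_sqrt A = (THE S. positive_op S \<and> S \<circ> S = A)"

definition phi :: "(nat \<Rightarrow> 'a::real_inner \<Rightarrow> 'a) \<Rightarrow> nat \<Rightarrow> ('a \<Rightarrow> 'a) \<Rightarrow> ('a \<Rightarrow> 'a)" where
  "phi T n X = (\<lambda>x. \<Sum>i<n. T i (X (adjoint (T i) x)))"

definition phi_star :: "(nat \<Rightarrow> 'a::real_inner \<Rightarrow> 'a) \<Rightarrow> nat \<Rightarrow> ('a \<Rightarrow> 'a) \<Rightarrow> ('a \<Rightarrow> 'a)" where
  "phi_star T n X = (\<lambda>x. \<Sum>i<n. adjoint (T i) (X (T i x)))"

text \<open>Free semigroup on generators g_0..g_(n-1): words are lists over {..<n}.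
  Word [i1,...,ik] corresponds to g_i1 ... g_ik, |alpha| = length.\<close>
definition words :: "nat \<Rightarrow> nat list set" where
  "words n = {\<alpha>. set \<alpha> \<subseteq> {..<n}}"

definition T_word :: "(nat \<Rightarrow> 'a \<Rightarrow> 'a) \<Rightarrow> nat list \<Rightarrow> ('a \<Rightarrow> 'a)" where
  "T_word T \<alpha> = foldr (\<lambda>i S. T i \<circ> S) \<alpha> id"

text \<open>F^2(H_n) \<otimes> H is modelled as l^2(F_n^+; H): e_alpha \<otimes> h is the function
  that is h at alpha and 0 elsewhere.  Inner product:\<close>
definition fock_inner :: "nat \<Rightarrow> (nat list \<Rightarrow> 'a::real_inner) \<Rightarrow> (nat list \<Rightarrow> 'a) \<Rightarrow> real" where
  "fock_inner n f g = (\<Sum>\<^sub>\<infinity>\<alpha>\<in>words n. inner (f \<alpha>) (g \<alpha>))"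

text \<open>Poisson kernel K_{phi,D} h = sum_alpha e_alpha \<otimes> Delta T_alpha^* h.\<close>
definition poisson_kernel ::
  "(nat \<Rightarrow> 'a::real_inner \<Rightarrow> 'a) \<Rightarrow> nat \<Rightarrow> ('a \<Rightarrow> 'a) \<Rightarrow> 'a \<Rightarrow> (nat list \<Rightarrow> 'a)" where
  "poisson_kernel T n D h =
     (\<lambda>\<alpha>. if \<alpha> \<in> words n then op_sqrt (D - phi T n D) (adjoint (T_word T \<alpha>) h) else 0)"

definition proj_le :: "nat \<Rightarrow> (nat list \<Rightarrow> 'a::real_inner) \<Rightarrow> (nat list \<Rightarrow> 'a)" where
  "proj_le k F = (\<lambda>\<alpha>. if length \<alpha> \<le> k then F \<alpha> else 0)"

text \<open>trace[K^*(P_{\<le>k}\<otimes>I)K] = sum over an ONB e of <K^*(P\<otimes>I)K e, e>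
  = sum over e of <(P\<otimes>I) K e, K e> (the adjoint K^* unfolded by its defining identity).\<close>
definition curv_num :: "(nat \<Rightarrow> 'a::real_inner \<Rightarrow> 'a) \<Rightarrow> nat \<Rightarrow> ('a \<Rightarrow> 'a) \<Rightarrow> nat \<Rightarrow> ennreal" where
  "curv_num T n D k = (\<Sum>\<^sub>\<infinity>e\<in>some_onb.
      ennreal (fock_inner n (proj_le k (poisson_kernel T n D e)) (poisson_kernel T n D e)))"

definition curv_ratio :: "(nat \<Rightarrow> 'a::real_inner \<Rightarrow> 'a) \<Rightarrow> nat \<Rightarrow> ('a \<Rightarrow> 'a) \<Rightarrow> nat \<Rightarrow> ennreal" where
  "curv_ratio T n D k = curv_num T n D k / ennreal (\<Sum>j\<le>k. onorm (phi_star T n id) ^ j)"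

definition curv_star :: "(nat \<Rightarrow> 'a::real_inner \<Rightarrow> 'a) \<Rightarrow> nat \<Rightarrow> ('a \<Rightarrow> 'a) \<Rightarrow> ennreal" where
  "curv_star T n D = lim (curv_ratio T n D)"

end

(*
  Write \<Delta> = (D - \<phi>(D))^(1/2), C_\<alpha> = \<Delta> T_\<alpha>^* and t_j = trace \<phi>^j(\<Delta>^2) = \<Sum>_{|\<alpha>| = j} \<parallel>C_\<alpha>\<parallel>_HS^2.
  The numerator of the curvature ratio is t_0 + ... + t_k.  Because the Hilbert-Schmidt
  norm is invariant under taking adjoints and \<Sum>_i \<parallel>T_i y\<parallel>^2 = <\<phi>^*(I) y, y>,
    t_{j+1} = \<Sum>_{|\<alpha>| = j} \<Sum>_i \<parallel>T_i C_\<alpha>^*\<parallel>_HS^2 \<le> \<parallel>\<phi>^*(I)\<parallel> t_j.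
  For nonnegative t_j with t_{j+1} \<le> r t_j the ratios (t_0 + ... + t_k) / (1 + r + ... + r^k)
  decrease, so they converge, and the limit is finite iff t_0 = trace (D - \<phi>(D)) is.
  The positive square root \<Delta> is obtained from the binomial series of sqrt (1 - x).
*)

theory Submission
  imports Defs
begin

section \<open>Absolutely convergent series in complete spaces\<close>

lemma summable_norm_cancel_complete:
  fixes f :: "nat \<Rightarrow> 'a::{real_normed_vector,complete_space}"
  assumes "summable (\<lambda>n. norm (f n))"
  shows "summable f"
proof -
  let ?S = "\<lambda>n. \<Sum>i<n. f i" and ?N = "\<lambda>n. \<Sum>i<n. norm (f i)"
  have dist_le: "dist (?S m) (?S n) \<le> dist (?N m) (?N n)" if "m \<le> n" for m n
  proof -
    have S_diff: "?S n - ?S m = (\<Sum>i\<in>{m..<n}. f i)"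
      using sum_diff_nat_ivl[OF le0 that, of f] by (simp add: atLeast0LessThan)
    have N_diff: "?N n - ?N m = (\<Sum>i\<in>{m..<n}. norm (f i))"
      using sum_diff_nat_ivl[OF le0 that, of "\<lambda>i. norm (f i)"] by (simp add: atLeast0LessThan)
    have "dist (?S m) (?S n) = norm (\<Sum>i\<in>{m..<n}. f i)"
      using S_diff by (metis dist_commute dist_norm)
    also have "\<dots> \<le> (\<Sum>i\<in>{m..<n}. norm (f i))" by (rule norm_sum)
    also have "\<dots> = dist (?N m) (?N n)"
      using N_diff sum_nonneg[of "{m..<n}" "\<lambda>i. norm (f i)"] by (simp add: dist_real_def)
    finally show ?thesis .
  qed
  have dist_le': "dist (?S m) (?S n) \<le> dist (?N m) (?N n)" for m n
    using dist_le[of m n] dist_le[of n m] by (cases "m \<le> n") (simp_all add: dist_commute)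
  have "Cauchy ?N" using assms by (simp add: summable_iff_convergent convergent_Cauchy)
  have "Cauchy ?S"
  proof (rule metric_CauchyI)
    fix e :: real
    assume "0 < e"
    then obtain M where M: "\<And>m n. M \<le> m \<Longrightarrow> M \<le> n \<Longrightarrow> dist (?N m) (?N n) < e"
      using \<open>Cauchy ?N\<close> metric_CauchyD by metis
    show "\<exists>M. \<forall>m\<ge>M. \<forall>n\<ge>M. dist (?S m) (?S n) < e"
      using le_less_trans[OF dist_le' M] by blast
  qed
  thus ?thesis by (simp add: summable_iff_convergent Cauchy_convergent_iff)
qed

lemma summable_norm_complete:
  fixes f :: "nat \<Rightarrow> 'a::{real_normed_vector,complete_space}"
  assumes "summable (\<lambda>n. norm (f n))"
  shows "norm (suminf f) \<le> (\<Sum>n. norm (f n))"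
proof (rule LIMSEQ_le)
  show "(\<lambda>n. norm (\<Sum>i<n. f i)) \<longlonglongrightarrow> norm (suminf f)"
    by (intro tendsto_norm summable_LIMSEQ summable_norm_cancel_complete[OF assms])
  show "(\<lambda>n. \<Sum>i<n. norm (f i)) \<longlonglongrightarrow> (\<Sum>n. norm (f n))"
    by (rule summable_LIMSEQ[OF assms])
  show "\<exists>N. \<forall>n\<ge>N. norm (\<Sum>i<n. f i) \<le> (\<Sum>i<n. norm (f i))"
    by (intro exI allI impI norm_sum)
qed

lemma (in bounded_bilinear) Cauchy_product_sums_bilinear:
  assumes "summable a" "summable b"
    and "summable (\<lambda>k. norm (a k))" "summable (\<lambda>k. norm (b k))"
  shows "(\<lambda>k. \<Sum>i\<le>k. prod (a i) (b (k - i))) sums prod (suminf a) (suminf b)"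
proof -
  obtain K where K: "\<And>x y. norm (prod x y) \<le> norm x * norm y * K" "0 < K"
    using pos_bounded by blast
  let ?g = "\<lambda>(i,j). prod (a i) (b j)" and ?f = "\<lambda>(i,j). norm (a i) * norm (b j)"
  let ?square = "\<lambda>n. {..<n} \<times> {..<n}" and ?triangle = "\<lambda>n. {(i::nat, j::nat). i + j < n}"
  have triangle_square: "?triangle n \<subseteq> ?square n" for n by auto
  have "prod (\<Sum>i<n. a i) (\<Sum>j<n. b j) = sum ?g (?square n)" for n
    unfolding sum_left by (simp add: sum_right sum.cartesian_product)
  moreover have "(\<lambda>n. prod (\<Sum>i<n. a i) (\<Sum>j<n. b j)) \<longlonglongrightarrow> prod (suminf a) (suminf b)"
    by (intro tendsto summable_LIMSEQ assms)
  ultimately have g_square: "(\<lambda>n. sum ?g (?square n)) \<longlonglongrightarrow> prod (suminf a) (suminf b)"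
    by simp
  have "(\<lambda>n. (\<Sum>i<n. norm (a i)) * (\<Sum>j<n. norm (b j))) \<longlonglongrightarrow> (\<Sum>k. norm (a k)) * (\<Sum>k. norm (b k))"
    by (intro tendsto_mult summable_LIMSEQ assms)
  hence f_square: "(\<lambda>n. sum ?f (?square n)) \<longlonglongrightarrow> (\<Sum>k. norm (a k)) * (\<Sum>k. norm (b k))"
    by (simp add: sum_product sum.cartesian_product)
  have f_triangle: "(\<lambda>n. sum ?f (?triangle n)) \<longlonglongrightarrow> (\<Sum>k. norm (a k)) * (\<Sum>k. norm (b k))"
    using Cauchy_product_sums[of "\<lambda>k. norm (a k)" "\<lambda>k. norm (b k)"] assms
    by (simp add: sums_def sum.triangle_reindex)
  \<comment> \<open>The part of the square outside the triangle is controlled by the scalar Cauchy product of the norms.\<close>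
  have bound: "norm (sum ?g (?square n) - sum ?g (?triangle n))
      \<le> K * (sum ?f (?square n) - sum ?f (?triangle n))" for n
  proof -
    have "norm (sum ?g (?square n) - sum ?g (?triangle n)) = norm (sum ?g (?square n - ?triangle n))"
      using triangle_square by (simp add: sum_diff)
    also have "\<dots> \<le> (\<Sum>p\<in>?square n - ?triangle n. norm (?g p))"
      by (rule norm_sum)
    also have "\<dots> \<le> (\<Sum>p\<in>?square n - ?triangle n. K * ?f p)"
      by (intro sum_mono) (simp add: case_prod_beta K(1) mult.commute[of K])
    also have "\<dots> = K * (sum ?f (?square n) - sum ?f (?triangle n))"
      using triangle_square by (simp add: sum_distrib_left[symmetric] sum_diff)
    finally show ?thesis .
  qed
  have "(\<lambda>n. sum ?f (?square n) - sum ?f (?triangle n)) \<longlonglongrightarrow> 0"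
    using tendsto_diff[OF f_square f_triangle] by simp
  hence "(\<lambda>n. K * (sum ?f (?square n) - sum ?f (?triangle n))) \<longlonglongrightarrow> 0"
    by (rule tendsto_mult_right_zero)
  hence "(\<lambda>n. sum ?g (?square n) - sum ?g (?triangle n)) \<longlonglongrightarrow> 0"
    by (rule Lim_null_comparison[rotated]) (simp add: bound)
  from tendsto_diff[OF g_square this]
  have "(\<lambda>n. sum ?g (?triangle n)) \<longlonglongrightarrow> prod (suminf a) (suminf b)" by simp
  thus ?thesis by (simp add: sums_def sum.triangle_reindex)
qed

section \<open>Hilbert spaces\<close>

lemma subspace_closure:
  fixes S :: "'a::real_normed_vector set"
  assumes "subspace S"
  shows "subspace (closure S)"
  unfolding subspace_def
proof (intro conjI ballI allI)
  show "0 \<in> closure S" using assms closure_subset subspace_0 by blast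
next
  fix x y assume "x \<in> closure S" "y \<in> closure S"
  then obtain f g where "\<And>n. f n \<in> S" "f \<longlonglongrightarrow> x" "\<And>n. g n \<in> S" "g \<longlonglongrightarrow> y"
    unfolding closure_sequential by metis
  thus "x + y \<in> closure S"
    unfolding closure_sequential
    by (intro exI[of _ "\<lambda>n. f n + g n"]) (simp add: tendsto_add subspace_add[OF assms])
next
  fix c :: real and x assume "x \<in> closure S"
  then obtain f where "\<And>n. f n \<in> S" "f \<longlonglongrightarrow> x" unfolding closure_sequential by metis
  thus "c *\<^sub>R x \<in> closure S"
    unfolding closure_sequential
    by (intro exI[of _ "\<lambda>n. c *\<^sub>R f n"]) (simp add: tendsto_scaleR subspace_scale[OF assms])
qed

lemma quadratic_nonneg_discriminant:
  fixes a b c :: real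
  assumes nonneg: "\<And>t. 0 \<le> a + 2 * t * b + t\<^sup>2 * c" and "0 \<le> c"
  shows "b\<^sup>2 \<le> a * c"
proof (cases "c = 0")
  case True
  have "b = 0"
  proof (rule ccontr)
    assume "b \<noteq> 0"
    hence "a + 2 * (- (a + 1) / (2 * b)) * b = -1" by (simp add: field_simps)
    thus False using nonneg[of "- (a + 1) / (2 * b)"] True by simp
  qed
  thus ?thesis using True by simp
next
  case False
  hence "0 < c" using \<open>0 \<le> c\<close> by simp
  have "0 \<le> a + 2 * (- b / c) * b + (- b / c)\<^sup>2 * c" by (rule nonneg)
  also have "\<dots> = a - b\<^sup>2 / c" using \<open>0 < c\<close> by (simp add: power2_eq_square field_simps)
  finally show ?thesis using \<open>0 < c\<close> by (simp add: pos_divide_le_eq mult.commute)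
qed

lemma parallelogram_law:
  fixes u v :: "'a::real_inner"
  shows "(norm (u + v))\<^sup>2 + (norm (u - v))\<^sup>2 = 2 * (norm u)\<^sup>2 + 2 * (norm v)\<^sup>2"
  by (simp add: power2_norm_eq_inner inner_add_left inner_add_right inner_diff_left
      inner_diff_right inner_commute)

lemma closed_subspace_best_approximation:
  fixes M :: "'a::{real_inner,complete_space} set"
  assumes "subspace M" "closed M"
  obtains p where "p \<in> M" "\<And>q. q \<in> M \<Longrightarrow> norm (x - p) \<le> norm (x - q)"
proof -
  define d where "d = (INF q\<in>M. (norm (x - q))\<^sup>2)"
  have "M \<noteq> {}" using assms(1) subspace_0 by blast
  have bdd: "bdd_below ((\<lambda>q. (norm (x - q))\<^sup>2) ` M)" by (rule bdd_belowI2[of _ 0]) simp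
  have d_le: "d \<le> (norm (x - q))\<^sup>2" if "q \<in> M" for q
    unfolding d_def using bdd that by (rule cINF_lower)
  have "\<exists>q\<in>M. (norm (x - q))\<^sup>2 < d + inverse (Suc k)" for k
    using cINF_less_iff[OF \<open>M \<noteq> {}\<close> bdd, of "d + inverse (Suc k)"]
    unfolding d_def[symmetric] by simp
  then obtain m where m: "\<And>k. m k \<in> M" "\<And>k. (norm (x - m k))\<^sup>2 < d + inverse (Suc k)"
    by metis
  have m_close: "(norm (m j - m k))\<^sup>2 \<le> 2 * inverse (Suc j) + 2 * inverse (Suc k)" for j k
  proof -
    have "(1/2) *\<^sub>R (m j + m k) \<in> M"
      using assms(1) m(1) by (simp add: subspace_add subspace_scale)
    hence "d \<le> (norm (x - (1/2) *\<^sub>R (m j + m k)))\<^sup>2" by (rule d_le)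
    moreover have "(x - m j) + (x - m k) = 2 *\<^sub>R (x - (1/2) *\<^sub>R (m j + m k))"
      by (simp add: algebra_simps scaleR_2)
    ultimately have "4 * d \<le> (norm ((x - m j) + (x - m k)))\<^sup>2"
      by (simp add: power_mult_distrib)
    moreover have "(x - m j) - (x - m k) = m k - m j" by simp
    ultimately show ?thesis
      using parallelogram_law[of "x - m j" "x - m k"] m(2)[of j] m(2)[of k]
      by (simp add: norm_minus_commute)
  qed
  have "Cauchy m"
  proof (rule metric_CauchyI)
    fix e :: real
    assume "0 < e"
    obtain N :: nat where N: "4 / e\<^sup>2 < N" using reals_Archimedean2 by blast
    have small: "2 * inverse (Suc k) < e\<^sup>2 / 2" if "N \<le> k" for k
    proof -
      have "4 / e\<^sup>2 < Suc k" using N that by linarith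
      thus ?thesis using \<open>0 < e\<close> by (simp add: field_simps)
    qed
    have "dist (m j) (m k) < e" if "N \<le> j" "N \<le> k" for j k
    proof -
      have "(dist (m j) (m k))\<^sup>2 < e\<^sup>2"
        using m_close[of j k] small[OF that(1)] small[OF that(2)] by (simp add: dist_norm)
      thus ?thesis using \<open>0 < e\<close> by (simp add: power_less_imp_less_base)
    qed
    thus "\<exists>N. \<forall>j\<ge>N. \<forall>k\<ge>N. dist (m j) (m k) < e" by blast
  qed
  then obtain p where p: "m \<longlonglongrightarrow> p" using Cauchy_convergent_iff convergent_def by blast
  have "p \<in> M" using assms(2) m(1) p closed_sequentially by blast
  have "(\<lambda>k. (norm (x - m k))\<^sup>2) \<longlonglongrightarrow> (norm (x - p))\<^sup>2" using p by (intro tendsto_intros)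
  moreover have "(\<lambda>k. d + inverse (Suc k)) \<longlonglongrightarrow> d"
    using tendsto_add[OF tendsto_const LIMSEQ_inverse_real_of_nat] by simp
  ultimately have "(norm (x - p))\<^sup>2 \<le> d"
    using m(2) by (intro LIMSEQ_le) (auto intro: less_imp_le)
  hence "norm (x - p) \<le> norm (x - q)" if "q \<in> M" for q
    using d_le[OF that] by (simp add: power2_le_imp_le)
  with \<open>p \<in> M\<close> show thesis using that by blast
qed

lemma best_approximation_orthogonal:
  fixes M :: "'a::real_inner set"
  assumes "subspace M" "p \<in> M" "\<And>q. q \<in> M \<Longrightarrow> norm (x - p) \<le> norm (x - q)" "v \<in> M"
  shows "inner (x - p) v = 0"
proof -
  have "0 \<le> 0 + 2 * t * (- inner (x - p) v) + t\<^sup>2 * (norm v)\<^sup>2" for t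
  proof -
    have "p + t *\<^sub>R v \<in> M" using assms by (simp add: subspace_add subspace_scale)
    hence "(norm (x - p))\<^sup>2 \<le> (norm (x - (p + t *\<^sub>R v)))\<^sup>2" using assms(3) by (simp add: power_mono)
    also have "\<dots> = (norm (x - p))\<^sup>2 - 2 * t * inner (x - p) v + t\<^sup>2 * (norm v)\<^sup>2"
      unfolding power2_norm_eq_inner
      by (simp add: inner_diff_left inner_diff_right inner_add_left inner_add_right
          inner_commute algebra_simps power2_eq_square)
    finally show ?thesis by simp
  qed
  from quadratic_nonneg_discriminant[OF this] show ?thesis by simp
qed

lemma orthogonal_projection_exists:
  fixes M :: "'a::{real_inner,complete_space} set"
  assumes "subspace M" "closed M"
  obtains p where "p \<in> M" "\<And>v. v \<in> M \<Longrightarrow> inner (x - p) v = 0"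
  using closed_subspace_best_approximation[OF assms] best_approximation_orthogonal[OF assms(1)]
  by metis

lemma riesz_representation:
  fixes f :: "'a::{real_inner,complete_space} \<Rightarrow> real"
  assumes "bounded_linear f"
  obtains z where "\<And>x. f x = inner x z"
proof (cases "\<forall>x. f x = 0")
  case True
  thus thesis using that[of 0] by simp
next
  case False
  then obtain x0 where "f x0 \<noteq> 0" by blast
  interpret bounded_linear f by fact
  have "subspace {x. f x = 0}" by (auto simp: subspace_def add scale)
  moreover have "closed {x. f x = 0}"
    using continuous_closed_vimage[of "{0}" f] by (simp add: isCont vimage_def)
  ultimately obtain p where "f p = 0" and orth: "\<And>v. f v = 0 \<Longrightarrow> inner (x0 - p) v = 0"
    by (rule orthogonal_projection_exists[of _ x0]) auto
  define w where "w = x0 - p"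
  have "f w \<noteq> 0" using \<open>f x0 \<noteq> 0\<close> \<open>f p = 0\<close> by (simp add: w_def diff)
  hence "w \<noteq> 0" by auto
  have "f x = inner x ((f w / (norm w)\<^sup>2) *\<^sub>R w)" for x
  proof -
    have "f (f x *\<^sub>R w - f w *\<^sub>R x) = 0" by (simp add: diff scale)
    hence "inner w (f x *\<^sub>R w - f w *\<^sub>R x) = 0" using orth unfolding w_def by blast
    hence "f x * (norm w)\<^sup>2 = f w * inner x w"
      by (simp add: inner_diff_right power2_norm_eq_inner inner_commute)
    thus ?thesis using \<open>w \<noteq> 0\<close> by (simp add: field_simps)
  qed
  thus thesis by (rule that)
qed

lemma adjoint_works_hilbert:
  fixes T :: "'a::{real_inner,complete_space} \<Rightarrow> 'b::real_inner"
  assumes "bounded_linear T"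
  shows "inner (T x) y = inner x (adjoint T y)"
proof -
  have "\<exists>z. \<forall>x. inner (T x) y = inner x z" for y
    using riesz_representation[OF bounded_linear_compose[OF bounded_linear_inner_left assms]]
    by metis
  hence "\<exists>g. \<forall>x y. inner (T x) y = inner x (g y)" by metis
  thus ?thesis unfolding adjoint_def by (rule someI_ex[where P="\<lambda>g. \<forall>x y. inner (T x) y = inner x (g y)", THEN spec, THEN spec])
qed

lemma bounded_linear_adjoint:
  fixes T :: "'a::{real_inner,complete_space} \<Rightarrow> 'b::real_inner"
  assumes "bounded_linear T"
  shows "bounded_linear (adjoint T)"
proof -
  interpret bounded_linear T by fact
  obtain K where K: "\<And>x. norm (T x) \<le> norm x * K" "0 < K" using pos_bounded by blast
  note adj = adjoint_works_hilbert[OF assms]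
  show ?thesis
  proof (rule bounded_linear_intro[where K=K])
    fix y z
    show "adjoint T (y + z) = adjoint T y + adjoint T z"
      by (rule vector_eq_ldot[THEN iffD1]) (simp add: adj[symmetric] inner_add_right)
  next
    fix r y
    show "adjoint T (r *\<^sub>R y) = r *\<^sub>R adjoint T y"
      by (rule vector_eq_ldot[THEN iffD1]) (simp add: adj[symmetric])
  next
    fix y
    have "(norm (adjoint T y))\<^sup>2 = inner (T (adjoint T y)) y" by (simp add: adj power2_norm_eq_inner)
    also have "\<dots> \<le> norm (adjoint T y) * K * norm y"
      using norm_cauchy_schwarz K(1) by (meson mult_right_mono norm_ge_zero order_trans)
    finally show "norm (adjoint T y) \<le> norm y * K"
      using K(2) by (cases "adjoint T y = 0") (auto simp: power2_eq_square mult.commute mult.left_commute)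
  qed
qed

definition orthonormal :: "'a::real_inner set \<Rightarrow> bool" where
  "orthonormal B \<longleftrightarrow> (\<forall>e\<in>B. norm e = 1) \<and> pairwise orthogonal B"

lemma orthonormal_basis_iff: "orthonormal_basis B \<longleftrightarrow> orthonormal B \<and> closure (span B) = UNIV"
  by (simp add: orthonormal_basis_def orthonormal_def pairwise_def orthogonal_def conj_assoc)

lemma orthonormal_subset: "orthonormal B \<Longrightarrow> F \<subseteq> B \<Longrightarrow> orthonormal F"
  by (auto simp: orthonormal_def intro: pairwise_subset)

lemma orthonormal_basis_exists: "\<exists>B::'a::{real_inner,complete_space} set. orthonormal_basis B"
proof -
  obtain M :: "'a set" where "orthonormal M" and maximal: "\<And>X. orthonormal X \<Longrightarrow> M \<subseteq> X \<Longrightarrow> X = M"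
  proof -
    have "\<Union>C \<in> {B. orthonormal B}" if "subset.chain {B. orthonormal B} C" for C :: "'a set set"
    proof -
      have C: "\<And>B. B \<in> C \<Longrightarrow> orthonormal B" "chain\<^sub>\<subseteq> C"
        using that unfolding subset.chain_def chain_subset_def by auto
      have "pairwise orthogonal (\<Union>C)"
        using C orthonormal_def by (intro pairwise_chain_Union) auto
      thus ?thesis using C(1) unfolding orthonormal_def by auto
    qed
    thus thesis using subset_Zorn'[of "{B. orthonormal B}"] that by auto
  qed
  have "closure (span M) = UNIV"
  proof (rule ccontr)
    assume "closure (span M) \<noteq> UNIV"
    then obtain y where "y \<notin> closure (span M)" by blast
    obtain p where p: "p \<in> closure (span M)"
      and orth: "\<And>v. v \<in> closure (span M) \<Longrightarrow> inner (y - p) v = 0"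
      using orthogonal_projection_exists[OF subspace_closure[OF subspace_span] closed_closure] by blast
    have "y - p \<noteq> 0" using \<open>y \<notin> closure (span M)\<close> p by auto
    define e where "e = (y - p) /\<^sub>R norm (y - p)"
    have "norm e = 1" unfolding e_def using \<open>y - p \<noteq> 0\<close> by simp
    have e_orth: "orthogonal e f \<and> orthogonal f e" if "f \<in> M" for f
    proof -
      have "f \<in> closure (span M)" using that by (meson closure_subset span_base subsetD)
      hence "inner (y - p) f = 0" by (rule orth)
      thus ?thesis unfolding e_def orthogonal_def by (simp add: inner_commute)
    qed
    have "e \<notin> M"
    proof
      assume "e \<in> M"
      hence "inner e e = 0" using e_orth orthogonal_def by blast
      thus False using \<open>norm e = 1\<close> by simp
    qed
    moreover have "orthonormal (insert e M)"
      using \<open>orthonormal M\<close> \<open>norm e = 1\<close> e_orth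
      unfolding orthonormal_def by (simp add: pairwise_insert)
    ultimately show False using maximal by blast
  qed
  thus ?thesis using \<open>orthonormal M\<close> orthonormal_basis_iff by blast
qed

lemma orthonormal_basis_some_onb: "orthonormal_basis (some_onb :: 'a::{real_inner,complete_space} set)"
  unfolding some_onb_def by (rule someI_ex[OF orthonormal_basis_exists])

lemma norm_diff_orthonormal_combination:
  assumes "orthonormal F" "finite F"
  shows "(norm (x - (\<Sum>e\<in>F. u e *\<^sub>R e)))\<^sup>2
    = (norm x)\<^sup>2 - (\<Sum>e\<in>F. (inner x e)\<^sup>2) + (\<Sum>e\<in>F. (u e - inner x e)\<^sup>2)"
proof -
  have "inner (\<Sum>e\<in>F. u e *\<^sub>R e) (\<Sum>e\<in>F. u e *\<^sub>R e) = (\<Sum>e\<in>F. \<Sum>f\<in>F. u e * u f * inner f e)"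
    by (simp add: inner_sum_left inner_sum_right sum_distrib_left mult.assoc)
  also have "\<dots> = (\<Sum>e\<in>F. (u e)\<^sup>2)"
  proof (rule sum.cong[OF refl])
    fix e assume "e \<in> F"
    have "(\<Sum>f\<in>F. u e * u f * inner f e) = (\<Sum>f\<in>F. if f = e then (u e)\<^sup>2 else 0)"
      using assms(1) \<open>e \<in> F\<close> unfolding orthonormal_def pairwise_def orthogonal_def
      by (intro sum.cong) (auto simp: power2_eq_square simp flip: power2_norm_eq_inner)
    thus "(\<Sum>f\<in>F. u e * u f * inner f e) = (u e)\<^sup>2" using assms(2) \<open>e \<in> F\<close> by simp
  qed
  finally show ?thesis
    unfolding power2_norm_eq_inner[of "x - _"]
    by (simp add: inner_diff_left inner_diff_right inner_sum_right inner_commute power2_diff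
        sum.distrib sum_subtractf sum_distrib_left algebra_simps power2_norm_eq_inner)
qed

lemma bessel_inequality:
  assumes "orthonormal F" "finite F"
  shows "(\<Sum>e\<in>F. (inner x e)\<^sup>2) \<le> (norm x)\<^sup>2"
proof -
  have "0 \<le> (norm (x - (\<Sum>e\<in>F. inner x e *\<^sub>R e)))\<^sup>2" by simp
  thus ?thesis using norm_diff_orthonormal_combination[OF assms, of x "\<lambda>e. inner x e"] by simp
qed

text \<open>Restates \<open>summable_on_ennreal\<close>, whose name is shadowed by a fact about \<open>enat\<close>.\<close>

lemma ennreal_summable_on [simp]: "(f :: 'a \<Rightarrow> ennreal) summable_on A"
  by (rule nonneg_summable_on_complete) simp

lemma sum_le_infsum_ennreal:
  fixes f :: "'a \<Rightarrow> ennreal"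
  assumes "finite F" "F \<subseteq> A"
  shows "sum f F \<le> infsum f A"
proof -
  have "infsum f F \<le> infsum f A"
    by (rule infsum_mono_neutral) (use assms in auto)
  thus ?thesis using assms(1) by simp
qed

lemma infsum_cmult_le_ennreal:
  fixes f :: "'a \<Rightarrow> ennreal"
  shows "(\<Sum>\<^sub>\<infinity>x\<in>A. c * f x) \<le> c * (\<Sum>\<^sub>\<infinity>x\<in>A. f x)"
proof (rule infsum_le_finite_sums)
  fix F assume "finite F" "F \<subseteq> A"
  hence "sum f F \<le> (\<Sum>\<^sub>\<infinity>x\<in>A. f x)" by (rule sum_le_infsum_ennreal)
  thus "(\<Sum>x\<in>F. c * f x) \<le> c * (\<Sum>\<^sub>\<infinity>x\<in>A. f x)"
    by (simp add: sum_distrib_left[symmetric] mult_left_mono)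
qed simp

lemma parseval_ennreal:
  fixes B :: "'a::real_inner set"
  assumes "orthonormal_basis B"
  shows "(\<Sum>\<^sub>\<infinity>e\<in>B. ennreal ((inner x e)\<^sup>2)) = ennreal ((norm x)\<^sup>2)"
proof (rule antisym)
  have "orthonormal B" using assms orthonormal_basis_iff by blast
  show "(\<Sum>\<^sub>\<infinity>e\<in>B. ennreal ((inner x e)\<^sup>2)) \<le> ennreal ((norm x)\<^sup>2)"
  proof (rule infsum_le_finite_sums)
    fix F assume "finite F" "F \<subseteq> B"
    hence "(\<Sum>e\<in>F. (inner x e)\<^sup>2) \<le> (norm x)\<^sup>2"
      using bessel_inequality orthonormal_subset[OF \<open>orthonormal B\<close>] by blast
    thus "(\<Sum>e\<in>F. ennreal ((inner x e)\<^sup>2)) \<le> ennreal ((norm x)\<^sup>2)"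
      by (simp add: sum_ennreal ennreal_leI)
  qed simp
  show "ennreal ((norm x)\<^sup>2) \<le> (\<Sum>\<^sub>\<infinity>e\<in>B. ennreal ((inner x e)\<^sup>2))"
  proof (rule ennreal_le_epsilon)
    fix \<epsilon> :: real
    assume "0 < \<epsilon>"
    have "x \<in> closure (span B)" using assms orthonormal_basis_iff by blast
    then obtain y where "y \<in> span B" "dist y x < sqrt \<epsilon>"
      using \<open>0 < \<epsilon>\<close> unfolding closure_approachable by (meson real_sqrt_gt_zero)
    then obtain F u where F: "finite F" "F \<subseteq> B" "y = (\<Sum>e\<in>F. u e *\<^sub>R e)"
      unfolding span_explicit by blast
    have "norm (x - y) \<le> sqrt \<epsilon>"
      using \<open>dist y x < sqrt \<epsilon>\<close> by (simp add: dist_norm norm_minus_commute)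
    hence "(norm (x - y))\<^sup>2 \<le> \<epsilon>"
      using power_mono[of "norm (x - y)" "sqrt \<epsilon>" 2] \<open>0 < \<epsilon>\<close> by simp
    hence "(norm x)\<^sup>2 \<le> (\<Sum>e\<in>F. (inner x e)\<^sup>2) + \<epsilon>"
      using norm_diff_orthonormal_combination[OF orthonormal_subset[OF \<open>orthonormal B\<close> F(2)] F(1), of x u]
        sum_nonneg[of F "\<lambda>e. (u e - inner x e)\<^sup>2"] F(3) by simp
    hence "ennreal ((norm x)\<^sup>2) \<le> (\<Sum>e\<in>F. ennreal ((inner x e)\<^sup>2)) + ennreal \<epsilon>"
      using \<open>0 < \<epsilon>\<close> by (simp add: sum_ennreal ennreal_plus[symmetric] sum_nonneg ennreal_leI del: ennreal_plus)
    also have "(\<Sum>e\<in>F. ennreal ((inner x e)\<^sup>2)) \<le> (\<Sum>\<^sub>\<infinity>e\<in>B. ennreal ((inner x e)\<^sup>2))"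
      using F by (intro sum_le_infsum_ennreal)
    finally show "ennreal ((norm x)\<^sup>2) \<le> (\<Sum>\<^sub>\<infinity>e\<in>B. ennreal ((inner x e)\<^sup>2)) + ennreal \<epsilon>"
      by (simp add: add_right_mono)
  qed
qed

lemma infsum_sum_ennreal:
  fixes f :: "'a \<Rightarrow> 'b \<Rightarrow> ennreal"
  assumes "finite A"
  shows "(\<Sum>\<^sub>\<infinity>x\<in>B. \<Sum>a\<in>A. f a x) = (\<Sum>a\<in>A. \<Sum>\<^sub>\<infinity>x\<in>B. f a x)"
  using assms
proof (induction A rule: finite_induct)
  case (insert a A)
  have "(\<Sum>\<^sub>\<infinity>x\<in>B. f a x + (\<Sum>a\<in>A. f a x)) = (\<Sum>\<^sub>\<infinity>x\<in>B. f a x) + (\<Sum>\<^sub>\<infinity>x\<in>B. \<Sum>a\<in>A. f a x)"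
    by (rule infsum_add) simp_all
  thus ?case using insert by simp
qed simp

lemma hilbert_schmidt_le_adjoint:
  fixes F :: "'a::real_inner \<Rightarrow> 'b::real_inner" and G :: "'b \<Rightarrow> 'a"
  assumes "orthonormal_basis B" "orthonormal_basis C"
    and adj: "\<And>x y. inner (F x) y = inner x (G y)"
  shows "(\<Sum>\<^sub>\<infinity>e\<in>B. ennreal ((norm (F e))\<^sup>2)) \<le> (\<Sum>\<^sub>\<infinity>f\<in>C. ennreal ((norm (G f))\<^sup>2))"
proof (rule infsum_le_finite_sums)
  fix E assume E: "finite E" "E \<subseteq> B"
  have "orthonormal E" using E(2) assms(1) orthonormal_basis_iff orthonormal_subset by blast
  have "(\<Sum>e\<in>E. ennreal ((norm (F e))\<^sup>2)) = (\<Sum>e\<in>E. \<Sum>\<^sub>\<infinity>f\<in>C. ennreal ((inner e (G f))\<^sup>2))"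
    by (simp add: parseval_ennreal[OF assms(2), symmetric] adj)
  also have "\<dots> = (\<Sum>\<^sub>\<infinity>f\<in>C. \<Sum>e\<in>E. ennreal ((inner (G f) e)\<^sup>2))"
    unfolding infsum_sum_ennreal[OF E(1)] by (intro sum.cong infsum_cong refl) (simp add: inner_commute)
  also have "\<dots> \<le> (\<Sum>\<^sub>\<infinity>f\<in>C. ennreal ((norm (G f))\<^sup>2))"
    using bessel_inequality[OF \<open>orthonormal E\<close> E(1)]
    by (intro infsum_mono) (simp_all add: sum_ennreal ennreal_leI)
  finally show "(\<Sum>e\<in>E. ennreal ((norm (F e))\<^sup>2)) \<le> (\<Sum>\<^sub>\<infinity>f\<in>C. ennreal ((norm (G f))\<^sup>2))" .
qed simp

lemma hilbert_schmidt_eq_adjoint: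
  fixes F :: "'a::real_inner \<Rightarrow> 'b::real_inner" and G :: "'b \<Rightarrow> 'a"
  assumes "orthonormal_basis B" "orthonormal_basis C"
    and adj: "\<And>x y. inner (F x) y = inner x (G y)"
  shows "(\<Sum>\<^sub>\<infinity>e\<in>B. ennreal ((norm (F e))\<^sup>2)) = (\<Sum>\<^sub>\<infinity>f\<in>C. ennreal ((norm (G f))\<^sup>2))"
proof (rule antisym)
  have "inner (G x) y = inner x (F y)" for x y by (metis adj inner_commute)
  thus "(\<Sum>\<^sub>\<infinity>f\<in>C. ennreal ((norm (G f))\<^sup>2)) \<le> (\<Sum>\<^sub>\<infinity>e\<in>B. ennreal ((norm (F e))\<^sup>2))"
    by (rule hilbert_schmidt_le_adjoint[OF assms(2,1)])
qed (rule hilbert_schmidt_le_adjoint[OF assms])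

section \<open>Square roots of positive operators\<close>

definition sqrt_one_minus_coeff :: "nat \<Rightarrow> real" where
  "sqrt_one_minus_coeff k = ((1/2) gchoose k) * (-1) ^ k"

lemma sqrt_one_minus_coeff_0 [simp]: "sqrt_one_minus_coeff 0 = 1"
  by (simp add: sqrt_one_minus_coeff_def)

lemma sqrt_one_minus_coeff_Suc:
  "sqrt_one_minus_coeff (Suc k) = sqrt_one_minus_coeff k * (of_nat k - 1/2) / of_nat (Suc k)"
  by (simp add: sqrt_one_minus_coeff_def gbinomial_prod_rev field_simps)

lemma sqrt_one_minus_coeff_nonpos: "1 \<le> k \<Longrightarrow> sqrt_one_minus_coeff k \<le> 0"
proof (induction k rule: dec_induct)
  case (step k)
  thus ?case by (simp add: sqrt_one_minus_coeff_Suc mult_nonpos_nonneg divide_nonpos_pos)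
qed (simp add: sqrt_one_minus_coeff_def)

lemma sum_sqrt_one_minus_coeff_nonneg: "0 \<le> (\<Sum>k\<le>m. sqrt_one_minus_coeff k)"
proof -
  have "(\<Sum>k\<le>m. sqrt_one_minus_coeff k) = (-1) ^ m * ((- 1/2 :: real) gchoose m)"
    using gbinomial_sum_lower_neg[of "1/2 :: real" m] by (simp add: sqrt_one_minus_coeff_def)
  also have "0 \<le> \<dots>"
  proof (induction m)
    case (Suc m)
    have "(-1) ^ Suc m * ((- 1/2 :: real) gchoose Suc m)
        = ((-1) ^ m * ((- 1/2 :: real) gchoose m)) * ((of_nat m + 1/2) / of_nat (Suc m))"
      by (simp add: gbinomial_prod_rev field_simps)
    thus ?case using Suc.IH by simp
  qed simp
  finally show ?thesis .
qed

lemma sum_abs_sqrt_one_minus_coeff: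
  "(\<Sum>k\<le>m. \<bar>sqrt_one_minus_coeff k\<bar>) = 2 - (\<Sum>k\<le>m. sqrt_one_minus_coeff k)"
proof (induction m)
  case (Suc m)
  thus ?case using sqrt_one_minus_coeff_nonpos[of "Suc m"] by simp
qed simp

lemma summable_abs_sqrt_one_minus_coeff: "summable (\<lambda>k. \<bar>sqrt_one_minus_coeff k\<bar>)"
proof (rule bounded_imp_summable)
  show "(\<Sum>k\<le>m. \<bar>sqrt_one_minus_coeff k\<bar>) \<le> 2" for m
    using sum_abs_sqrt_one_minus_coeff[of m] sum_sqrt_one_minus_coeff_nonneg[of m] by linarith
qed simp

lemma summable_sqrt_one_minus_coeff: "summable sqrt_one_minus_coeff"
  using summable_abs_sqrt_one_minus_coeff by (rule summable_rabs_cancel)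

lemma suminf_sqrt_one_minus_coeff_nonneg: "0 \<le> (\<Sum>k. sqrt_one_minus_coeff k)"
proof (rule LIMSEQ_le_const[OF summable_LIMSEQ[OF summable_sqrt_one_minus_coeff]])
  show "\<exists>N. \<forall>n\<ge>N. 0 \<le> (\<Sum>k<n. sqrt_one_minus_coeff k)"
  proof (intro exI allI impI)
    fix n :: nat assume "1 \<le> n"
    then obtain m where "n = Suc m" by (cases n) auto
    thus "0 \<le> (\<Sum>k<n. sqrt_one_minus_coeff k)"
      using sum_sqrt_one_minus_coeff_nonneg[of m] by (simp add: lessThan_Suc_atMost)
  qed
qed

lemma sqrt_one_minus_coeff_convolution:
  "(\<Sum>i\<le>k. sqrt_one_minus_coeff i * sqrt_one_minus_coeff (k - i))
     = (if k = 0 then 1 else if k = 1 then -1 else 0)"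
proof -
  have "(\<Sum>i\<le>k. sqrt_one_minus_coeff i * sqrt_one_minus_coeff (k - i))
      = (\<Sum>i\<le>k. ((1/2::real) gchoose i) * ((1/2) gchoose (k - i))) * (-1) ^ k"
    unfolding sum_distrib_right sqrt_one_minus_coeff_def
    by (intro sum.cong refl) (simp add: power_add[symmetric])
  also have "(\<Sum>i\<le>k. ((1/2::real) gchoose i) * ((1/2) gchoose (k - i))) = of_nat (1 choose k)"
    using gbinomial_Vandermonde[of "1/2::real" "1/2" k] by (simp add: atMost_atLeast0 binomial_gbinomial)
  finally show ?thesis by (cases k; cases "k - 1") (auto simp: binomial_eq_0)
qed

lemma positive_opD:
  assumes "positive_op P"
  shows "bounded_linear P" "inner (P x) y = inner x (P y)" "0 \<le> inner (P x) x"
  using assms unfolding positive_op_def by auto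

lemma positive_op_cauchy_schwarz:
  assumes "positive_op P"
  shows "(inner (P x) y)\<^sup>2 \<le> inner (P x) x * inner (P y) y"
proof (rule quadratic_nonneg_discriminant)
  interpret bounded_linear P by (rule positive_opD[OF assms])
  fix t :: real
  have "0 \<le> inner (P (x + t *\<^sub>R y)) (x + t *\<^sub>R y)" by (rule positive_opD[OF assms])
  also have "\<dots> = inner (P x) x + t * inner (P x) y + t * inner (P y) x + t * t * inner (P y) y"
    by (simp add: add scale inner_add_left inner_add_right algebra_simps)
  also have "inner (P y) x = inner (P x) y"
    by (metis positive_opD(2)[OF assms] inner_commute)
  finally show "0 \<le> inner (P x) x + 2 * t * inner (P x) y + t\<^sup>2 * inner (P y) y"
    by (simp add: power2_eq_square algebra_simps)
qed (rule positive_opD[OF assms])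

lemma positive_op_eq_zero:
  assumes "positive_op P" "inner (P y) y = 0"
  shows "P y = 0"
  using positive_op_cauchy_schwarz[OF assms(1), of y "P y"] assms(2) by simp

lemma positive_op_norm_le:
  assumes "positive_op P" and le: "\<And>x. inner (P x) x \<le> (norm x)\<^sup>2"
  shows "norm (P x) \<le> norm x"
proof -
  have "((norm (P x))\<^sup>2)\<^sup>2 = (inner (P x) (P x))\<^sup>2" by (simp add: power2_norm_eq_inner)
  also have "\<dots> \<le> inner (P x) x * inner (P (P x)) (P x)" by (rule positive_op_cauchy_schwarz[OF assms(1)])
  also have "\<dots> \<le> (norm x)\<^sup>2 * (norm (P x))\<^sup>2"
    by (intro mult_mono le positive_opD[OF assms(1)]) simp
  finally have *: "(norm (P x))\<^sup>2 * (norm (P x))\<^sup>2 \<le> (norm x)\<^sup>2 * (norm (P x))\<^sup>2"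
    by (simp only: power2_eq_square[of "(norm (P x))\<^sup>2"])
  have "(norm (P x))\<^sup>2 \<le> (norm x)\<^sup>2"
  proof (cases "P x = 0")
    case False
    thus ?thesis using mult_right_le_imp_le[OF *] by simp
  qed simp
  thus ?thesis by (simp add: power2_le_iff_abs_le)
qed

lemma positive_op_eqI_commuting:
  assumes P: "positive_op P" and R: "positive_op R"
    and squares: "\<And>x. P (P x) = R (R x)" and commute: "\<And>x. R (P x) = P (R x)"
  shows "P = R"
proof
  fix x
  interpret p: bounded_linear P by (rule positive_opD[OF P])
  interpret r: bounded_linear R by (rule positive_opD[OF R])
  define y where "y = P x - R x"
  \<comment> \<open>\<open>(P + R) (P - R) = P\<^sup>2 - R\<^sup>2 = 0\<close> as \<open>P\<close> and \<open>R\<close> commute.\<close>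
  have "P y + R y = 0" unfolding y_def by (simp add: p.diff r.diff squares commute)
  hence "inner (P y) y + inner (R y) y = 0" by (metis inner_add_left inner_zero_left)
  hence "inner (P y) y = 0" "inner (R y) y = 0"
    using positive_opD(3)[OF P, of y] positive_opD(3)[OF R, of y] by linarith+
  hence "P y = 0" "R y = 0" using positive_op_eq_zero P R by blast+
  hence "inner y y = 0"
    unfolding y_def by (simp add: inner_diff_left positive_opD(2)[OF P] positive_opD(2)[OF R])
  thus "P x = R x" unfolding y_def by simp
qed

lemma bounded_linear_funpow:
  fixes f :: "'a::real_normed_vector \<Rightarrow> 'a"
  shows "bounded_linear f \<Longrightarrow> bounded_linear (f ^^ k)"
proof (induction k)
  case (Suc k)
  thus ?case using bounded_linear_compose[OF Suc.prems Suc.IH[OF Suc.prems]] by (simp add: o_def)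
qed (simp add: id_def)

lemma norm_funpow_le:
  fixes f :: "'a::real_normed_vector \<Rightarrow> 'a"
  assumes "\<And>x. norm (f x) \<le> norm x"
  shows "norm ((f ^^ k) x) \<le> norm x"
proof (induction k)
  case (Suc k)
  thus ?case using assms[of "(f ^^ k) x"] by simp
qed simp

lemma inner_funpow_symmetric:
  fixes f :: "'a::real_inner \<Rightarrow> 'a"
  assumes "\<And>x y. inner (f x) y = inner x (f y)"
  shows "inner ((f ^^ k) x) y = inner x ((f ^^ k) y)"
proof (induction k arbitrary: y)
  case (Suc k)
  have "inner ((f ^^ Suc k) x) y = inner ((f ^^ k) x) (f y)" by (simp add: assms)
  also have "\<dots> = inner x ((f ^^ Suc k) y)" by (simp add: Suc.IH funpow_swap1)
  finally show ?case .
qed simp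

lemma funpow_commute:
  assumes "\<And>x. g (f x) = f (g x)"
  shows "g ((f ^^ k) x) = (f ^^ k) (g x)"
  by (induction k) (simp_all add: assms)

locale selfadjoint_contraction =
  fixes B :: "'a::{real_inner,complete_space} \<Rightarrow> 'a"
  assumes bounded_linear_B: "bounded_linear B"
    and inner_B_symmetric: "\<And>x y. inner (B x) y = inner x (B y)"
    and norm_B_le: "\<And>x. norm (B x) \<le> norm x"
begin

definition sqrt_one_minus :: "'a \<Rightarrow> 'a" where
  "sqrt_one_minus x = (\<Sum>k. sqrt_one_minus_coeff k *\<^sub>R (B ^^ k) x)"

lemma bounded_linear_funpow_B: "bounded_linear (B ^^ k)"
  by (rule bounded_linear_funpow[OF bounded_linear_B])

lemma summable_norm_sqrt_series: "summable (\<lambda>k. norm (sqrt_one_minus_coeff k *\<^sub>R (B ^^ k) x))"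
proof (rule summable_comparison_test)
  show "summable (\<lambda>k. \<bar>sqrt_one_minus_coeff k\<bar> * norm x)"
    by (rule summable_mult2[OF summable_abs_sqrt_one_minus_coeff])
  show "\<exists>N. \<forall>k\<ge>N. norm (norm (sqrt_one_minus_coeff k *\<^sub>R (B ^^ k) x)) \<le> \<bar>sqrt_one_minus_coeff k\<bar> * norm x"
    using norm_funpow_le[OF norm_B_le] by (auto intro!: mult_left_mono)
qed

lemma summable_sqrt_series: "summable (\<lambda>k. sqrt_one_minus_coeff k *\<^sub>R (B ^^ k) x)"
  by (rule summable_norm_cancel_complete[OF summable_norm_sqrt_series])

lemma bounded_linear_sqrt_one_minus: "bounded_linear sqrt_one_minus"
proof (rule bounded_linear_intro)
  fix x y
  show "sqrt_one_minus (x + y) = sqrt_one_minus x + sqrt_one_minus y"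
    unfolding sqrt_one_minus_def using bounded_linear_funpow_B
    by (simp add: linear_simps scaleR_add_right suminf_add[OF summable_sqrt_series summable_sqrt_series])
next
  fix r x
  show "sqrt_one_minus (r *\<^sub>R x) = r *\<^sub>R sqrt_one_minus x"
  proof -
    have "sqrt_one_minus_coeff k *\<^sub>R (B ^^ k) (r *\<^sub>R x) = r *\<^sub>R (sqrt_one_minus_coeff k *\<^sub>R (B ^^ k) x)" for k
      using bounded_linear_funpow_B by (simp add: linear_simps)
    thus ?thesis unfolding sqrt_one_minus_def by (simp only: suminf_scaleR_right[OF summable_sqrt_series])
  qed
next
  fix x
  have "norm (sqrt_one_minus x) \<le> (\<Sum>k. norm (sqrt_one_minus_coeff k *\<^sub>R (B ^^ k) x))"
    unfolding sqrt_one_minus_def by (rule summable_norm_complete[OF summable_norm_sqrt_series])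
  also have "\<dots> \<le> (\<Sum>k. \<bar>sqrt_one_minus_coeff k\<bar> * norm x)"
    using norm_funpow_le[OF norm_B_le] summable_norm_sqrt_series
      summable_mult2[OF summable_abs_sqrt_one_minus_coeff]
    by (intro suminf_le) (auto intro!: mult_left_mono)
  also have "\<dots> = norm x * (\<Sum>k. \<bar>sqrt_one_minus_coeff k\<bar>)"
    using suminf_mult2[OF summable_abs_sqrt_one_minus_coeff, of "norm x"] by (simp add: mult.commute)
  finally show "norm (sqrt_one_minus x) \<le> norm x * (\<Sum>k. \<bar>sqrt_one_minus_coeff k\<bar>)" .
qed

lemma inner_sqrt_one_minus_sums:
  "(\<lambda>k. sqrt_one_minus_coeff k * inner ((B ^^ k) x) y) sums inner (sqrt_one_minus x) y"
  using bounded_linear.sums[OF bounded_linear_inner_left summable_sqrt_series[THEN summable_sums]]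
  by (simp add: sqrt_one_minus_def)

lemma inner_sqrt_one_minus_symmetric: "inner (sqrt_one_minus x) y = inner x (sqrt_one_minus y)"
proof -
  have "inner ((B ^^ k) x) y = inner ((B ^^ k) y) x" for k
    using inner_funpow_symmetric[OF inner_B_symmetric, of k x y] by (simp add: inner_commute)
  hence "(\<lambda>k. sqrt_one_minus_coeff k * inner ((B ^^ k) x) y) sums inner (sqrt_one_minus y) x"
    using inner_sqrt_one_minus_sums[of y x] by simp
  thus ?thesis using inner_sqrt_one_minus_sums[of x y] sums_unique2 inner_commute by metis
qed

lemma inner_sqrt_one_minus_nonneg: "0 \<le> inner (sqrt_one_minus x) x"
proof -
  \<comment> \<open>All coefficients but the first are \<open>\<le> 0\<close>, and \<open>\<langle>B\<^sup>k x, x\<rangle> \<le> \<parallel>x\<parallel>\<^sup>2\<close>.\<close>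
  have lower: "(\<lambda>k. sqrt_one_minus_coeff k * (norm x)\<^sup>2) sums ((\<Sum>k. sqrt_one_minus_coeff k) * (norm x)\<^sup>2)"
    by (rule sums_mult2[OF summable_sqrt_one_minus_coeff[THEN summable_sums]])
  have termwise: "sqrt_one_minus_coeff k * (norm x)\<^sup>2 \<le> sqrt_one_minus_coeff k * inner ((B ^^ k) x) x" for k
  proof (cases "k = 0")
    case False
    have "inner ((B ^^ k) x) x \<le> norm ((B ^^ k) x) * norm x" by (rule norm_cauchy_schwarz)
    also have "\<dots> \<le> (norm x)\<^sup>2"
      using norm_funpow_le[OF norm_B_le] by (simp add: power2_eq_square mult_right_mono)
    finally show ?thesis
      using False sqrt_one_minus_coeff_nonpos[of k] by (intro mult_left_mono_neg) auto
  qed (simp add: power2_norm_eq_inner)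
  have "(\<Sum>k. sqrt_one_minus_coeff k) * (norm x)\<^sup>2 \<le> inner (sqrt_one_minus x) x"
    by (rule sums_le[OF termwise lower inner_sqrt_one_minus_sums])
  moreover have "0 \<le> (\<Sum>k. sqrt_one_minus_coeff k) * (norm x)\<^sup>2"
    using suminf_sqrt_one_minus_coeff_nonneg by simp
  ultimately show ?thesis by linarith
qed

lemma sqrt_one_minus_square: "sqrt_one_minus (sqrt_one_minus x) = x - B x"
proof (rule vector_eq_rdot[THEN iffD1], intro allI)
  fix y
  let ?a = "\<lambda>i. sqrt_one_minus_coeff i *\<^sub>R (B ^^ i) x" and ?b = "\<lambda>j. sqrt_one_minus_coeff j *\<^sub>R (B ^^ j) y"
  let ?\<delta> = "\<lambda>k::nat. if k = 0 then 1 else if k = 1 then -1 else (0::real)"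
  have "(\<lambda>k. \<Sum>i\<le>k. inner (?a i) (?b (k - i))) sums inner (sqrt_one_minus x) (sqrt_one_minus y)"
    unfolding sqrt_one_minus_def
    by (rule bounded_bilinear.Cauchy_product_sums_bilinear[OF bounded_bilinear_inner
          summable_sqrt_series summable_sqrt_series summable_norm_sqrt_series summable_norm_sqrt_series])
  moreover have "(\<Sum>i\<le>k. inner (?a i) (?b (k - i))) = ?\<delta> k * inner ((B ^^ k) x) y" for k
  proof -
    have term_eq: "inner (?a i) (?b (k - i))
        = sqrt_one_minus_coeff i * sqrt_one_minus_coeff (k - i) * inner ((B ^^ k) x) y"
      if "i \<le> k" for i
    proof -
      have "inner ((B ^^ i) x) ((B ^^ (k - i)) y) = inner ((B ^^ (k - i)) ((B ^^ i) x)) y"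
        by (simp add: inner_funpow_symmetric[OF inner_B_symmetric])
      also have "(B ^^ (k - i)) ((B ^^ i) x) = (B ^^ (k - i + i)) x"
        by (simp add: funpow_add)
      also have "k - i + i = k" using that by simp
      finally show ?thesis by simp
    qed
    have "(\<Sum>i\<le>k. inner (?a i) (?b (k - i)))
        = (\<Sum>i\<le>k. sqrt_one_minus_coeff i * sqrt_one_minus_coeff (k - i) * inner ((B ^^ k) x) y)"
      by (intro sum.cong refl term_eq) simp
    also have "\<dots> = (\<Sum>i\<le>k. sqrt_one_minus_coeff i * sqrt_one_minus_coeff (k - i)) * inner ((B ^^ k) x) y"
      by (simp add: sum_distrib_right)
    finally show ?thesis by (simp only: sqrt_one_minus_coeff_convolution)
  qed
  moreover have "(\<lambda>k. ?\<delta> k * inner ((B ^^ k) x) y) sums inner (x - B x) y"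
    using sums_finite[of "{0, 1}" "\<lambda>k. ?\<delta> k * inner ((B ^^ k) x) y"] by (simp add: inner_diff_left)
  ultimately have "inner (sqrt_one_minus x) (sqrt_one_minus y) = inner (x - B x) y"
    using sums_unique2 by simp
  thus "inner (sqrt_one_minus (sqrt_one_minus x)) y = inner (x - B x) y"
    by (simp add: inner_sqrt_one_minus_symmetric)
qed

lemma sqrt_one_minus_commute:
  assumes "bounded_linear R" and "\<And>x. R (B x) = B (R x)"
  shows "R (sqrt_one_minus x) = sqrt_one_minus (R x)"
proof -
  have "R (sqrt_one_minus x) = (\<Sum>k. R (sqrt_one_minus_coeff k *\<^sub>R (B ^^ k) x))"
    unfolding sqrt_one_minus_def by (rule bounded_linear.suminf[OF assms(1) summable_sqrt_series])
  also have "\<dots> = sqrt_one_minus (R x)"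
    unfolding sqrt_one_minus_def
    using assms(1) by (simp add: linear_simps funpow_commute[of R B, OF assms(2)])
  finally show ?thesis .
qed

end

lemma positive_op_sqrt_ex1:
  fixes A :: "'a::{real_inner,complete_space} \<Rightarrow> 'a"
  assumes A: "positive_op A"
  shows "\<exists>!S. positive_op S \<and> S \<circ> S = A"
proof -
  interpret a: bounded_linear A by (rule positive_opD(1)[OF A])
  define a where "a = onorm A + 1"
  have "0 < a" unfolding a_def using onorm_pos_le[OF positive_opD(1)[OF A]] by simp
  \<comment> \<open>\<open>A = a (I - B)\<close> with \<open>0 \<le> B \<le> I\<close>, so \<open>\<surd>a \<surd>(I - B)\<close> is a square root of \<open>A\<close>.\<close>
  define B where "B x = x - (1/a) *\<^sub>R A x" for x
  have A_le: "inner (A x) x \<le> a * (norm x)\<^sup>2" for x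
  proof -
    have "inner (A x) x \<le> norm (A x) * norm x" by (rule norm_cauchy_schwarz)
    also have "norm (A x) \<le> a * norm x"
      using onorm[OF positive_opD(1)[OF A], of x] norm_ge_zero[of x]
      unfolding a_def distrib_right by linarith
    hence "norm (A x) * norm x \<le> a * norm x * norm x" by (simp add: mult_right_mono)
    finally show ?thesis by (simp add: power2_eq_square mult.assoc)
  qed
  have inner_B: "inner (B x) x = (norm x)\<^sup>2 - inner (A x) x / a" for x
    by (simp add: B_def inner_diff_left power2_norm_eq_inner)
  have B_pos: "positive_op B"
    unfolding positive_op_def
  proof (intro conjI allI)
    show "bounded_linear B"
      unfolding B_def by (intro bounded_linear_sub bounded_linear_ident bounded_linear_const_scaleR a.bounded_linear_axioms)
    show "inner (B x) y = inner x (B y)" for x y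
      by (simp add: B_def inner_diff_left inner_diff_right positive_opD(2)[OF A])
    show "0 \<le> inner (B x) x" for x
      using A_le[of x] \<open>0 < a\<close> by (simp add: inner_B divide_le_eq mult.commute)
  qed
  have "norm (B x) \<le> norm x" for x
    using B_pos inner_B positive_opD(3)[OF A] \<open>0 < a\<close>
    by (intro positive_op_norm_le) (simp_all add: divide_nonneg_pos)
  then interpret b: selfadjoint_contraction B
    by (rule selfadjoint_contraction.intro[OF positive_opD(1,2)[OF B_pos]])
  define P where "P x = sqrt a *\<^sub>R b.sqrt_one_minus x" for x
  interpret p: bounded_linear b.sqrt_one_minus by (rule b.bounded_linear_sqrt_one_minus)
  have P_pos: "positive_op P"
    unfolding positive_op_def P_def
  proof (intro conjI allI bounded_linear_const_scaleR p.bounded_linear_axioms)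
    show "inner (sqrt a *\<^sub>R b.sqrt_one_minus x) y = inner x (sqrt a *\<^sub>R b.sqrt_one_minus y)" for x y
      by (simp add: b.inner_sqrt_one_minus_symmetric)
    show "0 \<le> inner (sqrt a *\<^sub>R b.sqrt_one_minus x) x" for x
      using b.inner_sqrt_one_minus_nonneg[of x] \<open>0 < a\<close> by simp
  qed
  have P_square: "P (P x) = A x" for x
  proof -
    have "P (P x) = (sqrt a * sqrt a) *\<^sub>R b.sqrt_one_minus (b.sqrt_one_minus x)"
      unfolding P_def by (simp add: p.scale)
    also have "\<dots> = A x" using \<open>0 < a\<close> by (simp add: b.sqrt_one_minus_square B_def)
    finally show ?thesis .
  qed
  show ?thesis
  proof (rule ex1I[of _ P])
    show "positive_op P \<and> P \<circ> P = A" using P_pos P_square by auto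
  next
    fix R assume R: "positive_op R \<and> R \<circ> R = A"
    interpret r: bounded_linear R using R positive_opD(1) by blast
    have R_square: "R (R x) = A x" for x using R by (auto simp: fun_eq_iff)
    \<comment> \<open>\<open>R\<close> commutes with \<open>R\<^sup>2 = A\<close>, hence with \<open>B\<close> and with the power series \<open>P\<close> in \<open>B\<close>.\<close>
    have "R (B x) = B (R x)" for x by (simp add: B_def r.diff r.scale flip: R_square)
    hence "R (P x) = P (R x)" for x
      unfolding P_def using b.sqrt_one_minus_commute[OF r.bounded_linear_axioms] by (simp add: r.scale)
    thus "R = P"
      using positive_op_eqI_commuting[OF P_pos conjunct1[OF R]] P_square R_square by metis
  qed
qed

lemma
  fixes A :: "'a::{real_inner,complete_space} \<Rightarrow> 'a"
  assumes "positive_op A"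
  shows positive_op_op_sqrt: "positive_op (op_sqrt A)"
    and op_sqrt_op_sqrt: "op_sqrt A (op_sqrt A x) = A x"
proof -
  have "positive_op (op_sqrt A) \<and> op_sqrt A \<circ> op_sqrt A = A"
    unfolding op_sqrt_def by (rule theI'[OF positive_op_sqrt_ex1[OF assms]])
  thus "positive_op (op_sqrt A)" "op_sqrt A (op_sqrt A x) = A x"
    by (auto simp: fun_eq_iff)
qed

section \<open>Ratios of partial sums\<close>

lemma ennreal_pow_times_le:
  fixes t :: "nat \<Rightarrow> ennreal" and r :: real
  assumes "0 \<le> r" and step: "\<And>j. t (Suc j) \<le> ennreal r * t j" and "j \<le> m"
  shows "t m \<le> ennreal (r ^ (m - j)) * t j"
  using \<open>j \<le> m\<close>
proof (induction m rule: dec_induct)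
  case (step m)
  have "t (Suc m) \<le> ennreal r * (ennreal (r ^ (m - j)) * t j)"
    using step.IH by (intro order_trans[OF assms(2)] mult_left_mono) auto
  also have "\<dots> = ennreal (r ^ (Suc m - j)) * t j"
    using \<open>0 \<le> r\<close> step.hyps by (simp add: ennreal_mult' Suc_diff_le mult.assoc)
  finally show ?case .
qed simp

lemma partial_sum_ratio_decseq:
  fixes t :: "nat \<Rightarrow> ennreal" and r :: real
  assumes "0 \<le> r" and step: "\<And>j. t (Suc j) \<le> ennreal r * t j"
  shows "decseq (\<lambda>k. (\<Sum>j\<le>k. t j) / ennreal (\<Sum>j\<le>k. r ^ j))"
proof (rule decseq_SucI)
  fix k
  define N where "N k = (\<Sum>j\<le>k. t j)" for k
  define R where "R k = (\<Sum>j\<le>k. r ^ j)" for k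
  have R_ge_1: "1 \<le> R k" for k
    unfolding R_def using sum_mono2[of "{..k}" "{0}" "\<lambda>j. r ^ j"] \<open>0 \<le> r\<close> by simp
  have R_pos: "ennreal (R k) \<noteq> 0" "ennreal (R k) \<noteq> top" for k
    using R_ge_1[of k] by auto
  \<comment> \<open>Each of the \<open>k + 1\<close> terms of \<open>R k\<close> contributes \<open>t (Suc k) r\<^sup>j \<le> r\<^bsup>k+1\<^esup> t j\<close>.\<close>
  have key: "t (Suc k) * ennreal (R k) \<le> ennreal (r ^ Suc k) * N k"
  proof -
    have "t (Suc k) * ennreal (R k) = (\<Sum>j\<le>k. t (Suc k) * ennreal (r ^ j))"
      unfolding R_def using \<open>0 \<le> r\<close> by (simp add: sum_distrib_left flip: sum_ennreal)
    also have "\<dots> \<le> (\<Sum>j\<le>k. ennreal (r ^ (Suc k - j)) * t j * ennreal (r ^ j))"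
      using ennreal_pow_times_le[of r t, OF assms] by (intro sum_mono mult_right_mono) auto
    also have "\<dots> = (\<Sum>j\<le>k. ennreal (r ^ Suc k) * t j)"
    proof (intro sum.cong refl)
      fix j assume "j \<in> {..k}"
      hence "r ^ (Suc k - j) * r ^ j = r ^ Suc k" by (simp add: power_add[symmetric])
      thus "ennreal (r ^ (Suc k - j)) * t j * ennreal (r ^ j) = ennreal (r ^ Suc k) * t j"
        using \<open>0 \<le> r\<close> by (simp add: ennreal_mult'[symmetric] mult_ac)
    qed
    finally show ?thesis by (simp add: N_def sum_distrib_left)
  qed
  have "N (Suc k) * ennreal (R k) = N k * ennreal (R k) + t (Suc k) * ennreal (R k)"
    by (simp add: N_def distrib_right)
  also have "\<dots> \<le> N k * ennreal (R k) + ennreal (r ^ Suc k) * N k"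
    by (intro add_left_mono key)
  also have "\<dots> = ennreal (R (Suc k)) * N k"
    using R_ge_1[of k] \<open>0 \<le> r\<close> by (simp add: R_def ennreal_plus distrib_left mult.commute)
  finally have "N (Suc k) * ennreal (R k) \<le> ennreal (R (Suc k)) * N k" .
  hence "N (Suc k) \<le> ennreal (R (Suc k)) * (N k / ennreal (R k))"
    using R_pos[of k] divide_right_mono_ennreal
    by (metis ennreal_mult_divide_eq ennreal_times_divide)
  hence "N (Suc k) / ennreal (R (Suc k)) \<le> N k / ennreal (R k)"
    using R_pos[of "Suc k"] by (intro divide_le_posI_ennreal) (auto simp: zero_less_iff_neq_zero)
  thus "(\<Sum>j\<le>Suc k. t j) / ennreal (\<Sum>j\<le>Suc k. r ^ j) \<le> (\<Sum>j\<le>k. t j) / ennreal (\<Sum>j\<le>k. r ^ j)"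
    by (simp only: N_def R_def)
qed

lemma partial_sum_ratio_limit:
  fixes t :: "nat \<Rightarrow> ennreal" and r :: real
  assumes "0 \<le> r" and "\<And>j. t (Suc j) \<le> ennreal r * t j"
  defines "X \<equiv> \<lambda>k. (\<Sum>j\<le>k. t j) / ennreal (\<Sum>j\<le>k. r ^ j)"
  shows "X \<longlonglongrightarrow> (INF k. X k)" and "(INF k. X k) < \<infinity> \<longleftrightarrow> t 0 < \<infinity>"
proof -
  have "decseq X" unfolding X_def using assms(1,2) by (rule partial_sum_ratio_decseq)
  thus "X \<longlonglongrightarrow> (INF k. X k)" by (rule LIMSEQ_INF)
  have X0: "X 0 = t 0" by (simp add: X_def divide_ennreal_def)
  show "(INF k. X k) < \<infinity> \<longleftrightarrow> t 0 < \<infinity>"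
  proof (cases "t 0 = \<infinity>")
    case True
    have "X k = \<infinity>" for k
    proof -
      have "t 0 \<le> (\<Sum>j\<le>k. t j)" by (rule member_le_sum) auto
      hence "(\<Sum>j\<le>k. t j) = \<infinity>" using True by (simp add: top_unique)
      thus ?thesis unfolding X_def by (simp only:) (simp add: ennreal_top_divide)
    qed
    thus ?thesis using True by simp
  next
    case False
    have "(INF k. X k) \<le> t 0" using INF_lower[of 0 UNIV X] X0 by simp
    thus ?thesis using False by (simp add: le_less_trans less_top)
  qed
qed

section \<open>Words, traces and the curvature\<close>

lemma T_word_Nil [simp]: "T_word T [] = id"
  by (simp add: T_word_def)

lemma T_word_Cons [simp]: "T_word T (i # \<alpha>) = T i \<circ> T_word T \<alpha>"
  by (simp add: T_word_def)

lemma Nil_in_words [simp]: "[] \<in> words n"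
  by (simp add: words_def)

lemma Cons_in_words_iff [simp]: "i # \<alpha> \<in> words n \<longleftrightarrow> i < n \<and> \<alpha> \<in> words n"
  by (simp add: words_def)

lemma finite_words_length_le: "finite {\<alpha> \<in> words n. length \<alpha> \<le> k}"
  using finite_lists_length_le[of "{..<n}" k] by (simp add: words_def conj_commute)

lemma words_length_Suc:
  "{\<alpha> \<in> words n. length \<alpha> = Suc j} = (\<lambda>(i, \<alpha>). i # \<alpha>) ` ({..<n} \<times> {\<alpha> \<in> words n. length \<alpha> = j})"
proof (intro equalityI subsetI)
  fix \<beta> assume "\<beta> \<in> {\<alpha> \<in> words n. length \<alpha> = Suc j}"
  then obtain i \<alpha> where "\<beta> = i # \<alpha>" "i < n" "\<alpha> \<in> words n" "length \<alpha> = j"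
    by (cases \<beta>) auto
  thus "\<beta> \<in> (\<lambda>(i, \<alpha>). i # \<alpha>) ` ({..<n} \<times> {\<alpha> \<in> words n. length \<alpha> = j})" by force
qed auto

lemma bounded_linear_T_word:
  assumes "\<And>i. i < n \<Longrightarrow> bounded_linear (T i)" and "\<alpha> \<in> words n"
  shows "bounded_linear (T_word T \<alpha>)"
  using assms(2)
proof (induction \<alpha>)
  case Nil
  show ?case by (simp add: id_def)
next
  case (Cons i \<alpha>)
  hence "i < n" "bounded_linear (T_word T \<alpha>)" by auto
  thus ?case using bounded_linear_compose[OF assms(1)] by (simp add: o_def)
qed

lemma adjoint_T_word_Cons:
  fixes T :: "nat \<Rightarrow> 'a::{real_inner,complete_space} \<Rightarrow> 'a"
  assumes bl: "\<And>i. i < n \<Longrightarrow> bounded_linear (T i)" and "i < n" "\<alpha> \<in> words n"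
  shows "adjoint (T_word T (i # \<alpha>)) = adjoint (T_word T \<alpha>) \<circ> adjoint (T i)"
proof (rule adjoint_unique, intro allI)
  fix x y
  show "inner (T_word T (i # \<alpha>) x) y = inner x ((adjoint (T_word T \<alpha>) \<circ> adjoint (T i)) y)"
    using adjoint_works_hilbert[OF bl[OF \<open>i < n\<close>]]
      adjoint_works_hilbert[OF bounded_linear_T_word[OF bl \<open>\<alpha> \<in> words n\<close>]]
    by simp
qed

lemma bounded_linear_phi_star_id:
  fixes T :: "nat \<Rightarrow> 'a::{real_inner,complete_space} \<Rightarrow> 'a"
  assumes "\<And>i. i < n \<Longrightarrow> bounded_linear (T i)"
  shows "bounded_linear (phi_star T n id)"
  unfolding phi_star_def id_def
proof (rule bounded_linear_sum)
  fix i assume "i \<in> {..<n}"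
  hence "bounded_linear (T i)" using assms by simp
  thus "bounded_linear (\<lambda>x. adjoint (T i) (T i x))"
    by (rule bounded_linear_compose[OF bounded_linear_adjoint[OF \<open>bounded_linear (T i)\<close>]])
qed

lemma sum_norm_sq_le_onorm_phi_star:
  fixes T :: "nat \<Rightarrow> 'a::{real_inner,complete_space} \<Rightarrow> 'a"
  assumes bl: "\<And>i. i < n \<Longrightarrow> bounded_linear (T i)"
  shows "(\<Sum>i<n. (norm (T i y))\<^sup>2) \<le> onorm (phi_star T n id) * (norm y)\<^sup>2"
proof -
  have "(\<Sum>i<n. (norm (T i y))\<^sup>2) = (\<Sum>i<n. inner y (adjoint (T i) (T i y)))"
    by (intro sum.cong refl) (simp add: power2_norm_eq_inner adjoint_works_hilbert[OF bl])
  also have "\<dots> = inner (phi_star T n id y) y"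
    by (simp add: phi_star_def inner_sum_right inner_commute)
  also have "\<dots> \<le> norm (phi_star T n id y) * norm y" by (rule norm_cauchy_schwarz)
  also have "\<dots> \<le> onorm (phi_star T n id) * norm y * norm y"
    by (rule mult_right_mono[OF onorm[OF bounded_linear_phi_star_id[OF bl]] norm_ge_zero])
  finally show ?thesis by (simp add: power2_eq_square mult.assoc)
qed

locale superharmonic =
  fixes T :: "nat \<Rightarrow> 'a::{real_inner,complete_space} \<Rightarrow> 'a" and D :: "'a \<Rightarrow> 'a" and n :: nat
  assumes bounded_linear_T: "\<And>i. i < n \<Longrightarrow> bounded_linear (T i)"
    and positive_D: "positive_op D"
    and phi_D_le: "\<forall>x. inner (phi T n D x) x \<le> inner (D x) x"
begin

text \<open>With \<open>\<Delta> = (D - \<phi>(D))\<^sup>1\<^sup>/\<^sup>2\<close>, \<open>word_trace \<alpha> = trace (T\<^sub>\<alpha> \<Delta>\<^sup>2 T\<^sub>\<alpha>\<^sup>*)\<close> and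
  \<open>level_trace j = trace \<phi>\<^sup>j(D - \<phi>(D))\<close>.\<close>

definition word_trace :: "nat list \<Rightarrow> ennreal" where
  "word_trace \<alpha> = (\<Sum>\<^sub>\<infinity>e\<in>some_onb.
     ennreal ((norm (op_sqrt (D - phi T n D) (adjoint (T_word T \<alpha>) e)))\<^sup>2))"

definition level_trace :: "nat \<Rightarrow> ennreal" where
  "level_trace j = (\<Sum>\<alpha>\<in>{\<alpha> \<in> words n. length \<alpha> = j}. word_trace \<alpha>)"

lemma positive_op_defect: "positive_op (D - phi T n D)"
proof -
  note D = positive_opD[OF positive_D]
  have term_bl: "bounded_linear (\<lambda>x. T i (D (adjoint (T i) x)))"
    and term_sym: "inner (T i (D (adjoint (T i) x))) y = inner x (T i (D (adjoint (T i) y)))"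
    if "i < n" for i x y
  proof -
    note T = bounded_linear_T[OF that]
    show "bounded_linear (\<lambda>x. T i (D (adjoint (T i) x)))"
      by (rule bounded_linear_compose[OF T bounded_linear_compose[OF D(1) bounded_linear_adjoint[OF T]]])
    have "inner (T i (D (adjoint (T i) x))) y = inner (adjoint (T i) x) (D (adjoint (T i) y))"
      by (simp add: adjoint_works_hilbert[OF T] D(2))
    also have "\<dots> = inner x (T i (D (adjoint (T i) y)))"
      by (metis adjoint_works_hilbert[OF T] inner_commute)
    finally show "inner (T i (D (adjoint (T i) x))) y = inner x (T i (D (adjoint (T i) y)))" .
  qed
  have "bounded_linear (phi T n D)"
    unfolding phi_def by (rule bounded_linear_sum) (simp add: term_bl)
  moreover have "inner (phi T n D x) y = inner x (phi T n D y)" for x y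
    by (simp add: phi_def inner_sum_left inner_sum_right term_sym)
  ultimately show ?thesis
    unfolding positive_op_def
  proof (intro conjI allI)
    assume "bounded_linear (phi T n D)"
    thus "bounded_linear (D - phi T n D)"
      unfolding fun_diff_def by (rule bounded_linear_sub[OF D(1)])
  next
    fix x y
    assume "\<And>x y. inner (phi T n D x) y = inner x (phi T n D y)"
    thus "inner ((D - phi T n D) x) y = inner x ((D - phi T n D) y)"
      by (simp add: inner_diff_left inner_diff_right D(2))
  next
    fix x
    show "0 \<le> inner ((D - phi T n D) x) x" using phi_D_le by (simp add: inner_diff_left)
  qed
qed

lemma norm_op_sqrt_defect_sq:
  "(norm (op_sqrt (D - phi T n D) v))\<^sup>2 = inner ((D - phi T n D) v) v"
proof -
  have "inner (op_sqrt (D - phi T n D) v) (op_sqrt (D - phi T n D) v)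
      = inner (op_sqrt (D - phi T n D) (op_sqrt (D - phi T n D) v)) v"
    by (rule positive_opD(2)[OF positive_op_op_sqrt[OF positive_op_defect], symmetric])
  thus ?thesis by (simp add: power2_norm_eq_inner op_sqrt_op_sqrt[OF positive_op_defect])
qed

lemma level_trace_0: "level_trace 0 = pos_trace (D - phi T n D)"
proof -
  have "{\<alpha> \<in> words n. length \<alpha> = 0} = {[]}" by auto
  moreover have "adjoint (id :: 'a \<Rightarrow> 'a) = id" by (rule adjoint_unique) simp
  ultimately show ?thesis
    by (simp add: level_trace_def word_trace_def pos_trace_def norm_op_sqrt_defect_sq)
qed

lemma sum_word_trace_Cons_le:
  assumes "\<alpha> \<in> words n"
  shows "(\<Sum>i<n. word_trace (i # \<alpha>)) \<le> ennreal (onorm (phi_star T n id)) * word_trace \<alpha>"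
proof -
  define C where "C = op_sqrt (D - phi T n D) \<circ> adjoint (T_word T \<alpha>)"
  have "bounded_linear C"
    unfolding C_def o_def
    using positive_opD(1)[OF positive_op_op_sqrt[OF positive_op_defect]]
      bounded_linear_adjoint[OF bounded_linear_T_word[OF bounded_linear_T assms]]
    by (rule bounded_linear_compose)
  define C' where "C' = adjoint C"
  note adj_C = adjoint_works_hilbert[OF \<open>bounded_linear C\<close>, folded C'_def]
  note hs = hilbert_schmidt_eq_adjoint[OF orthonormal_basis_some_onb orthonormal_basis_some_onb]
  \<comment> \<open>Hilbert--Schmidt norms are invariant under adjoints: \<open>\<parallel>C T\<^sub>i\<^sup>*\<parallel>\<^sub>2 = \<parallel>T\<^sub>i C\<^sup>*\<parallel>\<^sub>2\<close>.\<close>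
  have "word_trace (i # \<alpha>) = (\<Sum>\<^sub>\<infinity>f\<in>some_onb. ennreal ((norm (T i (C' f)))\<^sup>2))" if "i < n" for i
  proof -
    have "inner (C (adjoint (T i) x)) y = inner x (T i (C' y))" for x y
      using adj_C adjoint_works_hilbert[OF bounded_linear_T[OF that]] by (metis inner_commute)
    hence "(\<Sum>\<^sub>\<infinity>e\<in>some_onb. ennreal ((norm (C (adjoint (T i) e)))\<^sup>2))
        = (\<Sum>\<^sub>\<infinity>f\<in>some_onb. ennreal ((norm (T i (C' f)))\<^sup>2))"
      by (rule hs)
    moreover have "word_trace (i # \<alpha>) = (\<Sum>\<^sub>\<infinity>e\<in>some_onb. ennreal ((norm (C (adjoint (T i) e)))\<^sup>2))"
      using adjoint_T_word_Cons[OF bounded_linear_T that assms]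
      by (simp add: word_trace_def C_def del: T_word_Cons)
    ultimately show ?thesis by simp
  qed
  hence "(\<Sum>i<n. word_trace (i # \<alpha>)) = (\<Sum>i<n. \<Sum>\<^sub>\<infinity>f\<in>some_onb. ennreal ((norm (T i (C' f)))\<^sup>2))"
    by simp
  also have "\<dots> = (\<Sum>\<^sub>\<infinity>f\<in>some_onb. \<Sum>i<n. ennreal ((norm (T i (C' f)))\<^sup>2))"
    by (rule infsum_sum_ennreal[symmetric]) simp
  also have "\<dots> \<le> (\<Sum>\<^sub>\<infinity>f\<in>some_onb. ennreal (onorm (phi_star T n id)) * ennreal ((norm (C' f))\<^sup>2))"
  proof (rule infsum_mono)
    fix f :: 'a
    have "(\<Sum>i<n. (norm (T i (C' f)))\<^sup>2) \<le> onorm (phi_star T n id) * (norm (C' f))\<^sup>2"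
      by (rule sum_norm_sq_le_onorm_phi_star[OF bounded_linear_T])
    moreover have "0 \<le> onorm (phi_star T n id)"
      by (rule onorm_pos_le[OF bounded_linear_phi_star_id[OF bounded_linear_T]])
    ultimately show "(\<Sum>i<n. ennreal ((norm (T i (C' f)))\<^sup>2))
        \<le> ennreal (onorm (phi_star T n id)) * ennreal ((norm (C' f))\<^sup>2)"
      by (simp add: ennreal_leI flip: ennreal_mult')
  qed simp_all
  also have "\<dots> \<le> ennreal (onorm (phi_star T n id)) * (\<Sum>\<^sub>\<infinity>f\<in>some_onb. ennreal ((norm (C' f))\<^sup>2))"
    by (rule infsum_cmult_le_ennreal)
  also have "(\<Sum>\<^sub>\<infinity>f\<in>some_onb. ennreal ((norm (C' f))\<^sup>2)) = word_trace \<alpha>"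
    unfolding word_trace_def using hs[OF adj_C] by (simp add: C_def)
  finally show ?thesis .
qed

lemma level_trace_Suc_le: "level_trace (Suc j) \<le> ennreal (onorm (phi_star T n id)) * level_trace j"
proof -
  let ?L = "\<lambda>j. {\<alpha> \<in> words n. length \<alpha> = j}"
  have "inj_on (\<lambda>(i, \<alpha>). i # \<alpha>) ({..<n} \<times> ?L j)" by (auto simp: inj_on_def)
  hence "level_trace (Suc j) = (\<Sum>(i, \<alpha>)\<in>{..<n} \<times> ?L j. word_trace (i # \<alpha>))"
    unfolding level_trace_def words_length_Suc by (simp add: sum.reindex o_def prod.case_distrib)
  also have "\<dots> = (\<Sum>i<n. \<Sum>\<alpha>\<in>?L j. word_trace (i # \<alpha>))"
    by (rule sum.cartesian_product[symmetric])
  also have "\<dots> = (\<Sum>\<alpha>\<in>?L j. \<Sum>i<n. word_trace (i # \<alpha>))"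
    by (rule sum.swap)
  also have "\<dots> \<le> (\<Sum>\<alpha>\<in>?L j. ennreal (onorm (phi_star T n id)) * word_trace \<alpha>)"
    by (intro sum_mono sum_word_trace_Cons_le) simp
  also have "\<dots> = ennreal (onorm (phi_star T n id)) * level_trace j"
    by (simp add: level_trace_def sum_distrib_left)
  finally show ?thesis .
qed

lemma curv_num_eq_sum_level_trace: "curv_num T n D k = (\<Sum>j\<le>k. level_trace j)"
proof -
  let ?W = "{\<alpha> \<in> words n. length \<alpha> \<le> k}"
  have "fock_inner n (proj_le k (poisson_kernel T n D e)) (poisson_kernel T n D e)
      = (\<Sum>\<alpha>\<in>?W. (norm (op_sqrt (D - phi T n D) (adjoint (T_word T \<alpha>) e)))\<^sup>2)" for e
  proof -
    have "fock_inner n (proj_le k (poisson_kernel T n D e)) (poisson_kernel T n D e)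
        = (\<Sum>\<^sub>\<infinity>\<alpha>\<in>?W. (norm (op_sqrt (D - phi T n D) (adjoint (T_word T \<alpha>) e)))\<^sup>2)"
      unfolding fock_inner_def
      by (rule infsum_cong_neutral) (auto simp: proj_le_def poisson_kernel_def power2_norm_eq_inner)
    thus ?thesis using finite_words_length_le by simp
  qed
  hence "curv_num T n D k
      = (\<Sum>\<^sub>\<infinity>e\<in>some_onb. \<Sum>\<alpha>\<in>?W. ennreal ((norm (op_sqrt (D - phi T n D) (adjoint (T_word T \<alpha>) e)))\<^sup>2))"
    by (simp add: curv_num_def flip: sum_ennreal)
  also have "\<dots> = (\<Sum>\<alpha>\<in>?W. word_trace \<alpha>)"
    unfolding word_trace_def by (rule infsum_sum_ennreal[OF finite_words_length_le])
  also have "\<dots> = (\<Sum>j\<le>k. level_trace j)"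
  proof -
    have W: "?W = (\<Union>j\<le>k. {\<alpha> \<in> words n. length \<alpha> = j})" by auto
    have "finite {\<alpha> \<in> words n. length \<alpha> = j}" for j
      by (rule finite_subset[OF _ finite_words_length_le[of n j]]) auto
    thus ?thesis
      unfolding level_trace_def W by (intro sum.UNION_disjoint) auto
  qed
  finally show ?thesis .
qed

end

theorem theorem6p1:
  fixes T :: "nat \<Rightarrow> 'h::{real_inner, complete_space} \<Rightarrow> 'h"
    and D :: "'h \<Rightarrow> 'h" and n :: nat
  assumes "\<And>i. i < n \<Longrightarrow> bounded_linear (T i)"
    and "positive_op D"
    and "\<forall>x. inner (phi T n D x) x \<le> inner (D x) x"
  shows "(\<exists>L. curv_ratio T n D \<longlonglongrightarrow> L) \<and>
         (curv_star T n D < \<infinity> \<longleftrightarrow> pos_trace (D - phi T n D) < \<infinity>)"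
proof -
  interpret superharmonic T D n by (rule superharmonic.intro[OF assms])
  define r where "r = onorm (phi_star T n id)"
  have "0 \<le> r"
    unfolding r_def by (rule onorm_pos_le[OF bounded_linear_phi_star_id[OF assms(1)]])
  have ratio: "curv_ratio T n D = (\<lambda>k. (\<Sum>j\<le>k. level_trace j) / ennreal (\<Sum>j\<le>k. r ^ j))"
    by (simp add: fun_eq_iff curv_ratio_def curv_num_eq_sum_level_trace r_def)
  note limit = partial_sum_ratio_limit[of r level_trace, OF \<open>0 \<le> r\<close>
      level_trace_Suc_le[folded r_def], folded ratio]
  have "curv_star T n D = (INF k. curv_ratio T n D k)"
    unfolding curv_star_def by (rule limI[OF limit(1)])
  thus ?thesis using limit by (auto simp: level_trace_0)
qed

end
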